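(* Let $\lambda>0$, $\xi>0$, $v_2<v_1$ with either $v_2<0<v_1$ or $0<v_2<v_1$, and let $\tilde X(t)$ be the position of the extended telegraph process driven by GCPs with parameter $\lambda$ with Poissonian resets to the origin at rate $\xi$, started at $\tilde X(0)=0$, $V(0)=v_j$. For $j=1,2$, $t>0$ and $v_2t<x<v_1t$, the (generalized) density $\tilde p(x,t|v_j)=\tilde p_1(x,t|v_j)+\tilde p_2(x,t|v_j)$ and the flow function $\tilde w(x,t|v_j)=\tilde p_1(x,t|v_j)-\tilde p_2(x,t|v_j)$ are $$ \tilde p(x,t|v_j)=\frac{e^{-\xi t}\delta(x-v_jt)}{1+\lambda t}+\mathrm{sgn}(v_j)\mathbb 1_{\{0<\frac{x}{v_j}<t\}}\frac{\xi e^{-\xi x/v_j}}{v_j+\lambda x}+\mathbb 1_{\{v_2t<x<v_1t\}}\frac{e^{-\xi t}\lambda}{(v_1-v_2)(1+\lambda t)}+\boldsymbol I(x,t)\frac{\xi e^{\xi/\lambda}}{v_1-v_2}\Gamma_\lambda^\xi(x,t), $$ $$ \begin{aligned} \tilde w(x,t|v_j)&=(-1)^{j-1}\frac{e^{-\xi t}\delta(x-v_jt)}{1+\lambda t}+\mathbb 1_{\{v_2t<x<v_1t\}}\frac{\lambda e^{-\xi t}[\lambda(2\tau-t)+(-1)^j]}{(v_1-v_2)(1+\lambda t)^2}+\mathrm{sgn}(v_j)(-1)^{j-1}\mathbb 1_{\{0<\frac{x}{v_j}<t\}}\frac{\xi e^{-\xi x/v_j}}{v_j+\lambda x}\\ &\quad+\boldsymbol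 I(x,t)\Bigg\{\frac{2\xi(v_{3-j}+\lambda x)}{(v_1-v_2)^2}\Theta_\lambda^\xi(x,t)-\frac{\xi e^{\xi/\lambda}}{(v_1-v_2)^2}\Big[2v_{3-j}\xi\Big(\frac{x}{v_{3-j}}+\frac1\lambda\Big)+(v_1+v_2)\Big]\Gamma_\lambda^\xi(x,t)\Bigg\}. \end{aligned} $$
   Context: Geometric counting process (GCP) with intensity $\lambda>0$: a counting process $\tilde N_\lambda$ with $\tilde N_\lambda(0)=0$ obtained as a Poisson process whose rate is random and exponentially distributed with mean $\lambda$; its increments satisfy $P\{\tilde N_\lambda(t+s)-\tilde N_\lambda(t)=k\}=\frac{1}{1+\lambda s}\big(\frac{\lambda s}{1+\lambda s}\big)^k$, and each inter-event time has marginal density $\lambda/(1+\lambda t)^2$. Process without resets $(X(t),V(t))$: starts at $X(0)=0$ with $V(0)=v_j$ ($v_1,v_2\ne0$, $v_2<v_1$), velocity alternates between $v_1$ and $v_2$, $X(t)=\int_0^tV(s)ds$, with the periods spent at velocity $v_1$ and at $v_2$ governed by two independent GCPs of intensity $\lambda$. Its generalized sub-densities $p_i(x,t|v_j)=P[X(t)\in dx,V(t)=v_i|X(0)=0,V(0)=v_j]/dx$ are $p_i(x,t|v_j)=\mathbb 1_{\{i=j\}}\frac{\delta(x-v_jt)}{1+\lambda t}+\mathbb 1_{\{v_2t<x<v_1t\}}\frac{\lambda c_{i,j}}{(v_1-v_2)(1+\lambda t)^2}$ with $c_{1,1}=\lambda\tau$, $c_{1,2}=1+\lambda\tau$, $c_{2,1}=1+\lambda(t-\tau)$,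 $c_{2,2}=\lambda(t-\tau)$, $\tau=\tau(x,t)=\frac{x-v_2t}{v_1-v_2}$. Reset process $(\tilde X(t),V(t))$: same dynamics but instantaneously reset to the origin at the epochs of an independent Poisson process of rate $\xi$, restarting afresh with velocity $v_j$; its sub-densities $\tilde p_i(x,t|v_j)\,dx=P[\tilde X(t)\in dx,V(t)=v_i|\tilde X(0)=0,V(0)=v_j]$ satisfy $\tilde p_i(x,t|v_j)=e^{-\xi t}p_i(x,t|v_j)+\xi\int_0^te^{-\xi s}p_i(x,s|v_j)ds$. $\delta$ is the Dirac delta. Notation: $M_x=\max\{x/v_1,x/v_2\}$, $m_{x,t}=\min\{x/v_2,t\}$; $\Gamma(a,z_0,z_1)=\int_{z_0}^{z_1}s^{a-1}e^{-s}ds$; $\Gamma_\lambda^\xi(x,t)=\Gamma[0,(M_x+\frac1\lambda)\xi,(t+\frac1\lambda)\xi]$ if $v_2<0<v_1$, $=\Gamma[0,(\frac x{v_1}+\frac1\lambda)\xi,(m_{x,t}+\frac1\lambda)\xi]$ if $0<v_2<v_1$; $\boldsymbol I(x,t)=\mathbb 1_{\{\min\{v_2t,0\}<x<v_1t\}}$; $\Theta_\lambda^\xi(x,t)=\frac{e^{-\xi M_x}}{1+\lambda M_x}-\frac{e^{-\xi t}}{1+\lambda t}$ if $v_2<0<v_1$, $=\frac{e^{-\xi x/v_1}}{1+\lambda x/v_1}-\frac{e^{-\xi m_{x,t}}}{1+\lambda m_{x,t}}$ if $0<v_2<v_1$. *)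

theory Defs
  imports "HOL-Analysis.Analysis"
begin

definition vel :: "real \<Rightarrow> real \<Rightarrow> nat \<Rightarrow> real" where
  "vel v1 v2 j = (if j = 1 then v1 else v2)"

definition tau :: "real \<Rightarrow> real \<Rightarrow> real \<Rightarrow> real \<Rightarrow> real" where
  "tau v1 v2 x t = (x - v2 * t) / (v1 - v2)"

definition coef :: "real \<Rightarrow> real \<Rightarrow> real \<Rightarrow> nat \<Rightarrow> nat \<Rightarrow> real \<Rightarrow> real \<Rightarrow> real" where
  "coef lam v1 v2 i j x t =
     (if i = 1 \<and> j = 1 then lam * tau v1 v2 x t
      else if i = 1 then 1 + lam * tau v1 v2 x t
      else if j = 1 then 1 + lam * (t - tau v1 v2 x t)
      else lam * (t - tau v1 v2 x t))"

text \<open>Absolutely continuous part of the sub-density p_i(x,t|v_j) of the process without resets.\<close>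
definition pcont :: "real \<Rightarrow> real \<Rightarrow> real \<Rightarrow> nat \<Rightarrow> nat \<Rightarrow> real \<Rightarrow> real \<Rightarrow> real" where
  "pcont lam v1 v2 i j x t =
     indicator {v2 * t <..< v1 * t} x * lam * coef lam v1 v2 i j x t / ((v1 - v2) * (1 + lam * t)^2)"

text \<open>The generalized sub-density p_i(.,t|v_j), acting on a test function phi:
  integral of phi against  1{i=j} delta(x - v_j t)/(1+lam t) + pcont.\<close>
definition pact :: "real \<Rightarrow> real \<Rightarrow> real \<Rightarrow> nat \<Rightarrow> nat \<Rightarrow> (real \<Rightarrow> real) \<Rightarrow> real \<Rightarrow> real" where
  "pact lam v1 v2 i j phi t =
     (if i = j then phi (vel v1 v2 j * t) / (1 + lam * t) else 0)
     + integral UNIV (\<lambda>x. phi x * pcont lam v1 v2 i j x t)"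

text \<open>The generalized sub-density of the reset process, acting on a test function, via
  tilde p_i(x,t|v_j) = e^{-xi t} p_i(x,t|v_j) + xi int_0^t e^{-xi s} p_i(x,s|v_j) ds.\<close>
definition ptact :: "real \<Rightarrow> real \<Rightarrow> real \<Rightarrow> real \<Rightarrow> nat \<Rightarrow> nat \<Rightarrow> (real \<Rightarrow> real) \<Rightarrow> real \<Rightarrow> real" where
  "ptact lam xi v1 v2 i j phi t =
     exp (- xi * t) * pact lam v1 v2 i j phi t
     + xi * integral {0..t} (\<lambda>s. exp (- xi * s) * pact lam v1 v2 i j phi s)"

definition incgamma :: "real \<Rightarrow> real \<Rightarrow> real \<Rightarrow> real" where
  "incgamma a z0 z1 =
     (if z0 \<le> z1 then integral {z0..z1} (\<lambda>s. s powr (a - 1) * exp (- s))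
      else - integral {z1..z0} (\<lambda>s. s powr (a - 1) * exp (- s)))"

definition Mx :: "real \<Rightarrow> real \<Rightarrow> real \<Rightarrow> real" where
  "Mx v1 v2 x = max (x / v1) (x / v2)"

definition mxt :: "real \<Rightarrow> real \<Rightarrow> real \<Rightarrow> real" where
  "mxt v2 x t = min (x / v2) t"

definition GammaL :: "real \<Rightarrow> real \<Rightarrow> real \<Rightarrow> real \<Rightarrow> real \<Rightarrow> real \<Rightarrow> real" where
  "GammaL lam xi v1 v2 x t =
     (if v2 < 0 \<and> 0 < v1
      then incgamma 0 ((Mx v1 v2 x + 1 / lam) * xi) ((t + 1 / lam) * xi)
      else incgamma 0 ((x / v1 + 1 / lam) * xi) ((mxt v2 x t + 1 / lam) * xi))"

definition Ibold :: "real \<Rightarrow> real \<Rightarrow> real \<Rightarrow> real \<Rightarrow> real" where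
  "Ibold v1 v2 x t = indicator {min (v2 * t) 0 <..< v1 * t} x"

definition ThetaL :: "real \<Rightarrow> real \<Rightarrow> real \<Rightarrow> real \<Rightarrow> real \<Rightarrow> real \<Rightarrow> real" where
  "ThetaL lam xi v1 v2 x t =
     (if v2 < 0 \<and> 0 < v1
      then exp (- xi * Mx v1 v2 x) / (1 + lam * Mx v1 v2 x) - exp (- xi * t) / (1 + lam * t)
      else exp (- xi * (x / v1)) / (1 + lam * (x / v1))
           - exp (- xi * mxt v2 x t) / (1 + lam * mxt v2 x t))"

text \<open>Absolutely continuous part of the density tilde p(x,t|v_j) claimed in the theorem.\<close>
definition dens_cont :: "real \<Rightarrow> real \<Rightarrow> real \<Rightarrow> real \<Rightarrow> nat \<Rightarrow> real \<Rightarrow> real \<Rightarrow> real" where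
  "dens_cont lam xi v1 v2 j x t =
     sgn (vel v1 v2 j) * indicator {0 <..< t} (x / vel v1 v2 j)
       * xi * exp (- xi * x / vel v1 v2 j) / (vel v1 v2 j + lam * x)
     + indicator {v2 * t <..< v1 * t} x * exp (- xi * t) * lam / ((v1 - v2) * (1 + lam * t))
     + Ibold v1 v2 x t * xi * exp (xi / lam) / (v1 - v2) * GammaL lam xi v1 v2 x t"

text \<open>Absolutely continuous part of the flow function tilde w(x,t|v_j) claimed in the theorem.\<close>
definition flow_cont :: "real \<Rightarrow> real \<Rightarrow> real \<Rightarrow> real \<Rightarrow> nat \<Rightarrow> real \<Rightarrow> real \<Rightarrow> real" where
  "flow_cont lam xi v1 v2 j x t =
     indicator {v2 * t <..< v1 * t} x * lam * exp (- xi * t)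
       * (lam * (2 * tau v1 v2 x t - t) + (-1) ^ j) / ((v1 - v2) * (1 + lam * t)^2)
     + sgn (vel v1 v2 j) * (-1) ^ (j - 1) * indicator {0 <..< t} (x / vel v1 v2 j)
       * xi * exp (- xi * x / vel v1 v2 j) / (vel v1 v2 j + lam * x)
     + Ibold v1 v2 x t *
       (2 * xi * (vel v1 v2 (3 - j) + lam * x) / (v1 - v2)^2 * ThetaL lam xi v1 v2 x t
        - xi * exp (xi / lam) / (v1 - v2)^2
          * (2 * vel v1 v2 (3 - j) * xi * (x / vel v1 v2 (3 - j) + 1 / lam) + (v1 + v2))
          * GammaL lam xi v1 v2 x t)"

end

theory Submission
  imports Defs
begin

text \<open>
  Conditioning on the last reset, the sub-densities of the reset process are
  \<open>e^{-\<xi> t} p_i(\<cdot>,t) + \<xi> \<integral>\<^sub>0\<^sup>t e^{-\<xi> s} p_i(\<cdot>,s) ds\<close>.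
  The atom of \<open>p_j(\<cdot>,s)\<close> at \<open>x = v_j s\<close>, of mass \<open>1/(1 + \<lambda> s)\<close>, is smeared by the
  time integral into an absolutely continuous density (change of variables \<open>x = v_j s\<close>).
  For the absolutely continuous part of \<open>p_i\<close>, Fubini reduces everything to the time integrals
  \<open>\<integral>\<^sub>0\<^sup>t e^{-\<xi> s} p_i(x,s) ds\<close>. For fixed \<open>x\<close> the integrand is
  \<open>e^{-\<xi> s} (\<alpha> + \<beta> s) / (1 + \<lambda> s)\<^sup>2\<close> on the interval of times \<open>s\<close> with
  \<open>v\<^sub>2 s < x < v\<^sub>1 s\<close> and vanishes elsewhere; its primitive combines
  \<open>e^{-\<xi> s}/(1 + \<lambda> s)\<close> with the incomplete gamma function \<open>\<Gamma>(0, \<cdot>, (s + 1/\<lambda>) \<xi>)\<close>.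
  Adding and subtracting the contributions of \<open>i = 1, 2\<close> gives the density and the flow function.
\<close>

section \<open>Bounded kernels and Fubini\<close>

lemma integrable_bounded_support:
  fixes f :: "'a::euclidean_space \<Rightarrow> real"
  assumes "f \<in> borel_measurable borel" and "\<And>z. \<bar>f z\<bar> \<le> B"
    and "\<And>z. z \<notin> cbox u v \<Longrightarrow> f z = 0"
  shows "integrable lborel f"
  by (rule integrableI_bounded_set[where A = "cbox u v" and B = B])
     (use assms emeasure_lborel_cbox_finite[of u v] in auto)

lemma bounded_kernel_fubini:
  fixes K :: "real \<Rightarrow> real \<Rightarrow> real"
  assumes meas: "case_prod K \<in> borel_measurable borel"
    and bound: "\<And>x s. s \<in> {a..b} \<Longrightarrow> \<bar>K x s\<bar> \<le> C"
    and support: "\<And>x s. s \<in> {a..b} \<Longrightarrow> x \<notin> {c..d} \<Longrightarrow> K x s = 0"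
  shows "s \<in> {a..b} \<Longrightarrow> (\<lambda>x. K x s) integrable_on UNIV"
    and "((\<lambda>s. integral UNIV (\<lambda>x. K x s)) has_integral integral UNIV (\<lambda>x. integral {a..b} (K x))) {a..b}"
    and "(\<lambda>x. integral {a..b} (K x)) integrable_on UNIV"
proof -
  have K_pair[measurable]: "(\<lambda>z. K (fst z) (snd z)) \<in> borel_measurable (lborel \<Otimes>\<^sub>M lborel)"
    using meas by (simp add: lborel_prod case_prod_beta')
  have [measurable]: "K x \<in> borel_measurable borel" "(\<lambda>x. K x s) \<in> borel_measurable borel" for x s
    using measurable_Pair2[OF K_pair] measurable_Pair1[OF K_pair] by simp_all
  define F where "F z = indicator {a..b} (snd z) * K (fst z) (snd z)" for z
  have "integrable lborel F"
  proof (rule integrable_bounded_support[where B = "\<bar>C\<bar>" and u = "(c, a)" and v = "(d, b)"])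
    have "F \<in> borel_measurable (lborel \<Otimes>\<^sub>M lborel)" unfolding F_def by measurable
    then show "F \<in> borel_measurable borel" by (simp add: lborel_prod)
    show "\<bar>F z\<bar> \<le> \<bar>C\<bar>" for z
      using bound[of "snd z" "fst z"] by (cases "snd z \<in> {a..b}") (auto simp: F_def)
    show "F z = 0" if "z \<notin> cbox (c, a) (d, b)" for z
      using that support by (cases z) (auto simp: F_def cbox_Pair_eq indicator_def)
  qed
  then have F: "integrable (lborel \<Otimes>\<^sub>M lborel) (\<lambda>(x, s). F (x, s))" by (simp add: lborel_prod)
  have section_x: "integrable lborel (\<lambda>x. K x s)" if "s \<in> {a..b}" for s
  proof (rule integrable_bounded_support[where B = "\<bar>C\<bar>" and u = c and v = d])
    show "\<bar>K x s\<bar> \<le> \<bar>C\<bar>" for x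
      using bound[OF that, of x] by (meson abs_ge_self order_trans)
  qed (use support[OF that] in auto)
  have set_int: "set_integrable lborel {a..b} (K x)" for x
    unfolding set_integrable_def
  proof (rule integrable_bounded_support[where B = "\<bar>C\<bar>" and u = a and v = b])
    show "\<bar>indicator {a..b} s *\<^sub>R K x s\<bar> \<le> \<bar>C\<bar>" for s
      using bound[of s x] by (cases "s \<in> {a..b}") auto
  qed auto
  have inner_s: "(\<integral>s. F (x, s) \<partial>lborel) = integral {a..b} (K x)" for x
    using set_borel_integral_eq_integral(2)[OF set_int] by (simp add: F_def set_lebesgue_integral_def)
  have inner_x: "(\<integral>x. F (x, s) \<partial>lborel) = (if s \<in> {a..b} then integral UNIV (\<lambda>x. K x s) else 0)" for s
    using integral_lborel[OF section_x] by (simp add: F_def)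
  show "s \<in> {a..b} \<Longrightarrow> (\<lambda>x. K x s) integrable_on UNIV" for s
    using section_x by (rule integrable_on_lborel)
  have outer_x: "integrable lborel (\<lambda>x. integral {a..b} (K x))"
    using lborel_pair.integrable_fst[OF F] by (simp add: inner_s)
  then show "(\<lambda>x. integral {a..b} (K x)) integrable_on UNIV"
    by (rule integrable_on_lborel)
  have "((\<lambda>s. \<integral>x. F (x, s) \<partial>lborel) has_integral
      (\<integral>s. \<integral>x. F (x, s) \<partial>lborel \<partial>lborel)) UNIV"
    using lborel_pair.integrable_snd[OF F] by (intro has_integral_integral_lborel) simp
  moreover have "(\<integral>s. \<integral>x. F (x, s) \<partial>lborel \<partial>lborel) = integral UNIV (\<lambda>x. integral {a..b} (K x))"
    using lborel_pair.Fubini_integral[OF F] outer_x by (simp add: inner_s integral_lborel)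
  ultimately show "((\<lambda>s. integral UNIV (\<lambda>x. K x s)) has_integral
      integral UNIV (\<lambda>x. integral {a..b} (K x))) {a..b}"
    unfolding inner_x has_integral_restrict_UNIV by simp
qed

lemma lborel_integral_indicator_Ioo:
  fixes g :: "real \<Rightarrow> real"
  assumes "continuous_on {a..b} g" and [measurable]: "g \<in> borel_measurable borel"
  shows "integrable lborel (\<lambda>s. indicator {a <..< b} s * g s)"
    and "(\<integral>s. indicator {a <..< b} s * g s \<partial>lborel) = integral {a..b} g"
proof -
  obtain B where B: "\<And>s. s \<in> {a..b} \<Longrightarrow> \<bar>g s\<bar> \<le> B"
    using continuous_on_compact_bound[OF compact_Icc assms(1)] by auto
  show int: "integrable lborel (\<lambda>s. indicator {a <..< b} s * g s)"
  proof (rule integrable_bounded_support[where B = "\<bar>B\<bar>" and u = a and v = b])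
    show "\<bar>indicator {a <..< b} s * g s\<bar> \<le> \<bar>B\<bar>" for s
      using B[of s] by (cases "s \<in> {a <..< b}") auto
  qed auto
  have "((\<lambda>s. indicator {a <..< b} s * g s) has_integral (\<integral>s. indicator {a <..< b} s * g s \<partial>lborel)) UNIV"
    using int by (rule has_integral_integral_lborel)
  then have "(g has_integral (\<integral>s. indicator {a <..< b} s * g s \<partial>lborel)) {a..b}"
    unfolding indicator_times_eq_if has_integral_restrict_UNIV has_integral_Icc_iff_Ioo .
  then show "(\<integral>s. indicator {a <..< b} s * g s \<partial>lborel) = integral {a..b} g"
    by (rule integral_unique[symmetric])
qed

section \<open>The time kernel and its primitive\<close>

definition decay :: "real \<Rightarrow> real \<Rightarrow> real \<Rightarrow> real" where
  "decay lam xi s = exp (- xi * s) / (1 + lam * s)"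

definition decay_kernel :: "real \<Rightarrow> real \<Rightarrow> real \<Rightarrow> real \<Rightarrow> real \<Rightarrow> real" where
  "decay_kernel lam xi al be s = exp (- xi * s) * (al + be * s) / (1 + lam * s)^2"

definition decay_kernel_integral ::
    "real \<Rightarrow> real \<Rightarrow> real \<Rightarrow> real \<Rightarrow> real \<Rightarrow> real \<Rightarrow> real" where
  "decay_kernel_integral lam xi al be a b =
     (be - (al - be / lam) * xi) / lam
       * (exp (xi / lam) / lam * incgamma 0 ((a + 1 / lam) * xi) ((b + 1 / lam) * xi))
     - (al - be / lam) / lam * (decay lam xi b - decay lam xi a)"

lemma has_integral_decay:
  assumes lam: "lam > 0" and xi: "xi > 0" and ab: "0 \<le> a" "a \<le> b"
  shows "(decay lam xi has_integral
           exp (xi / lam) / lam * incgamma 0 ((a + 1 / lam) * xi) ((b + 1 / lam) * xi)) {a..b}"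
proof -
  define u where "u s = (s + 1 / lam) * xi" for s
  have u_pos: "u a > 0" using lam xi ab unfolding u_def by (simp add: add_nonneg_pos)
  have u_mono: "u a \<le> u b" using xi ab unfolding u_def by (simp add: mult_right_mono)
  have integral: "((\<lambda>s. xi *\<^sub>R (u s powr (0 - 1) * exp (- u s))) has_integral
          integral {u a..u b} (\<lambda>z. z powr (0 - 1) * exp (- z))) {a..b}"
  proof (rule has_integral_substitution[where c = "u a" and d = "u b"])
    show "u ` {a..b} \<subseteq> {u a..u b}" using xi unfolding u_def by (auto intro: mult_right_mono)
    show "continuous_on {u a..u b} (\<lambda>z. z powr (0 - 1) * exp (- z))"
      using u_pos by (intro continuous_intros) auto
    show "(u has_real_derivative xi) (at s within {a..b})" for s
      unfolding u_def by (auto intro!: derivative_eq_intros)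
  qed (use ab u_mono in auto)
  have integrand: "xi *\<^sub>R (u s powr (0 - 1) * exp (- u s)) = lam * exp (- xi / lam) * decay lam xi s"
    if "s \<in> {a..b}" for s
  proof -
    have "u s = xi * (1 + lam * s) / lam" using lam unfolding u_def by (simp add: field_simps)
    moreover have "exp (- u s) = exp (- xi * s) * exp (- xi / lam)"
      unfolding u_def by (simp add: exp_add[symmetric] algebra_simps)
    moreover have "1 + lam * s > 0" using that ab lam by (simp add: add_pos_nonneg)
    ultimately show ?thesis using lam xi unfolding decay_def by (simp add: powr_minus_divide)
  qed
  have "((\<lambda>s. lam * exp (- xi / lam) * decay lam xi s) has_integral
          incgamma 0 (u a) (u b)) {a..b}"
    using has_integral_eq[OF integrand integral] u_mono by (simp add: incgamma_def)
  then have "((\<lambda>s. exp (xi / lam) / lam * (lam * exp (- xi / lam) * decay lam xi s)) has_integral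
      exp (xi / lam) / lam * incgamma 0 (u a) (u b)) {a..b}"
    by (rule has_integral_mult_right)
  moreover have "exp (xi / lam) / lam * (lam * exp (- xi / lam) * decay lam xi s) = decay lam xi s" for s
  proof -
    have "exp (xi / lam) * exp (- xi / lam) = 1" by (simp add: exp_add[symmetric])
    then show ?thesis using lam by (simp add: field_simps)
  qed
  ultimately show ?thesis unfolding u_def by simp
qed

lemma decay_has_real_derivative:
  assumes "1 + lam * s \<noteq> 0"
  shows "(decay lam xi has_real_derivative
           - xi * decay lam xi s - lam * exp (- xi * s) / (1 + lam * s)^2) (at s within S)"
  unfolding decay_def using assms
  by (auto intro!: derivative_eq_intros simp: power2_eq_square divide_simps)

text \<open>With \<open>ga = al - be / lam\<close> we have \<open>al + be * s = ga + be / lam * (1 + lam * s)\<close>: the \<open>ga\<close>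
  part is a multiple of the derivative of \<open>decay\<close> corrected by a multiple of \<open>decay\<close> itself.\<close>
lemma decay_kernel_eq:
  assumes "lam \<noteq> 0" and "1 + lam * s \<noteq> 0"
  shows "decay_kernel lam xi al be s =
           (be - (al - be / lam) * xi) / lam * decay lam xi s
           - (al - be / lam) / lam * (- xi * decay lam xi s - lam * exp (- xi * s) / (1 + lam * s)^2)"
  using assms unfolding decay_kernel_def decay_def
  by (simp add: divide_simps power2_eq_square) (simp add: algebra_simps)

lemma has_integral_decay_kernel:
  assumes lam: "lam > 0" and xi: "xi > 0" and ab: "0 \<le> a" "a \<le> b"
  shows "(decay_kernel lam xi al be has_integral decay_kernel_integral lam xi al be a b) {a..b}"
proof -
  define D where "D s = - xi * decay lam xi s - lam * exp (- xi * s) / (1 + lam * s)^2" for s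
  have pos: "1 + lam * s > 0" if "s \<in> {a..b}" for s
    using that ab lam by (simp add: add_pos_nonneg)
  have "(D has_integral decay lam xi b - decay lam xi a) {a..b}"
  proof (rule fundamental_theorem_of_calculus[OF ab(2)])
    fix s assume "s \<in> {a..b}"
    then show "(decay lam xi has_vector_derivative D s) (at s within {a..b})"
      unfolding D_def has_real_derivative_iff_has_vector_derivative[symmetric]
      using pos by (intro decay_has_real_derivative) (simp add: less_imp_neq[symmetric])
  qed
  then have "((\<lambda>s. (be - (al - be / lam) * xi) / lam * decay lam xi s - (al - be / lam) / lam * D s)
     has_integral decay_kernel_integral lam xi al be a b) {a..b}"
    unfolding decay_kernel_integral_def
    by (intro has_integral_diff has_integral_mult_right has_integral_decay lam xi ab)
  then show ?thesis
  proof (rule has_integral_eq[rotated])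
    fix s assume "s \<in> {a..b}"
    then show "(be - (al - be / lam) * xi) / lam * decay lam xi s - (al - be / lam) / lam * D s
        = decay_kernel lam xi al be s"
      using pos[OF \<open>s \<in> {a..b}\<close>] lam unfolding D_def by (subst decay_kernel_eq) auto
  qed
qed

lemma decay_kernel_integral_add:
  "decay_kernel_integral lam xi al be a b + decay_kernel_integral lam xi al' be' a b
    = decay_kernel_integral lam xi (al + al') (be + be') a b"
  unfolding decay_kernel_integral_def by (simp add: algebra_simps add_divide_distrib diff_divide_distrib)

lemma decay_kernel_integral_diff:
  "decay_kernel_integral lam xi al be a b - decay_kernel_integral lam xi al' be' a b
    = decay_kernel_integral lam xi (al - al') (be - be') a b"
  unfolding decay_kernel_integral_def by (simp add: algebra_simps add_divide_distrib diff_divide_distrib)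

section \<open>Smearing the atom over the reset time\<close>

text \<open>The density at time \<open>t\<close> of the position \<open>v s\<close>, where the time \<open>s\<close> since the last reset has
  density \<open>\<xi> e^{-\<xi> s}\<close> on \<open>(0, t)\<close> and no velocity switch happened since, which has
  probability \<open>1 / (1 + \<lambda> s)\<close>.\<close>
definition ballistic_density :: "real \<Rightarrow> real \<Rightarrow> real \<Rightarrow> real \<Rightarrow> real \<Rightarrow> real" where
  "ballistic_density lam xi v x t =
     sgn v * indicator {0 <..< t} (x / v) * xi * exp (- xi * x / v) / (v + lam * x)"

lemma ballistic_density_scaled:
  assumes "v \<noteq> 0"
  shows "ballistic_density lam xi v (v * s) t
    = xi / \<bar>v\<bar> * (indicator {0 <..< t} s * (exp (- xi * s) / (1 + lam * s)))"
proof -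
  define w where "w = 1 + lam * s"
  have "v * s / v = s" "- xi * (v * s) / v = - xi * s" "v + lam * (v * s) = v * w"
    using assms unfolding w_def by (simp_all add: algebra_simps)
  then have scaled: "ballistic_density lam xi v (v * s) t
      = sgn v * indicator {0 <..< t} s * xi * exp (- xi * s) / (v * w)"
    unfolding ballistic_density_def by (simp only:)
  show ?thesis
    unfolding scaled w_def[symmetric] using assms
    by (cases "w = 0") (simp_all add: field_simps sgn_if)
qed

lemma ballistic_density_integral:
  fixes phi :: "real \<Rightarrow> real"
  assumes v: "v \<noteq> 0" and lam: "lam \<ge> 0" and phi: "continuous_on UNIV phi"
  shows "(\<lambda>s. exp (- xi * s) * (phi (v * s) / (1 + lam * s))) integrable_on {0..t}"
    and "(\<lambda>x. phi x * ballistic_density lam xi v x t) integrable_on UNIV"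
    and "integral UNIV (\<lambda>x. phi x * ballistic_density lam xi v x t)
           = xi * integral {0..t} (\<lambda>s. exp (- xi * s) * (phi (v * s) / (1 + lam * s)))"
proof -
  define g where "g s = exp (- xi * s) * (phi (v * s) / (1 + lam * s))" for s
  define h where "h x = phi x * ballistic_density lam xi v x t" for x
  have [measurable]: "phi \<in> borel_measurable borel"
    using phi by (rule borel_measurable_continuous_onI)
  have "\<forall>s \<in> {0..t}. 1 + lam * s \<noteq> 0"
    using lam by (simp add: add_pos_nonneg less_imp_neq[symmetric])
  then have g_cont: "continuous_on {0..t} g"
    unfolding g_def by (intro continuous_intros continuous_on_compose2[OF phi]) auto
  then show "g integrable_on {0..t}" by (rule integrable_continuous_interval)
  have "g \<in> borel_measurable borel" unfolding g_def by measurable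
  note g_int = lborel_integral_indicator_Ioo(1)[OF g_cont this]
    and g_integral = lborel_integral_indicator_Ioo(2)[OF g_cont this]
  have scaled: "h (0 + v * s) = xi / \<bar>v\<bar> * (indicator {0 <..< t} s * g s)" for s
    unfolding h_def g_def add_0 ballistic_density_scaled[OF v] by (simp add: ac_simps)
  have "integrable lborel (\<lambda>s. h (0 + v * s))"
    unfolding scaled using g_int by (rule integrable_mult_right)
  then have h_int: "integrable lborel h"
    using lborel_integrable_real_affine_iff[OF v, of h 0] by simp
  then show "(\<lambda>x. phi x * ballistic_density lam xi v x t) integrable_on UNIV"
    unfolding h_def by (rule integrable_on_lborel)
  have "integral UNIV h = \<bar>v\<bar> * (\<integral>s. h (0 + v * s) \<partial>lborel)"
    using integral_lborel[OF h_int] lborel_integral_real_affine[OF v, of h 0] by simp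
  then show "integral UNIV (\<lambda>x. phi x * ballistic_density lam xi v x t) = xi * integral {0..t} g"
    unfolding h_def[symmetric] scaled using v g_integral by simp
qed

section \<open>The window of times reaching a point\<close>

definition window_start :: "real \<Rightarrow> real \<Rightarrow> real \<Rightarrow> real" where
  "window_start v1 v2 x = (if v2 < 0 then Mx v1 v2 x else x / v1)"

definition window_end :: "real \<Rightarrow> real \<Rightarrow> real \<Rightarrow> real \<Rightarrow> real" where
  "window_end v1 v2 x t = (if v2 < 0 then t else mxt v2 x t)"

lemma window_interval:
  fixes v1 v2 x t :: real
  assumes cs: "(v2 < 0 \<and> 0 < v1) \<or> (0 < v2 \<and> v2 < v1)" and t: "t > 0"
    and x: "x \<in> {min (v2 * t) 0 <..< v1 * t}"
  defines "a \<equiv> window_start v1 v2 x" and "b \<equiv> window_end v1 v2 x t"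
  shows "0 \<le> a \<and> a \<le> b \<and> b \<le> t
    \<and> (\<forall>s \<in> {0..t} - {a, b}. (v2 * s < x \<and> x < v1 * s) \<longleftrightarrow> s \<in> {a..b})"
proof (cases "v2 < 0")
  case v2: True
  then have v1: "v1 > 0" using cs by auto
  have lower: "v2 * s < x \<longleftrightarrow> x / v2 < s" for s using v2 by (simp add: neg_divide_less_eq mult.commute)
  have upper: "x < v1 * s \<longleftrightarrow> x / v1 < s" for s using v1 by (simp add: pos_divide_less_eq mult.commute)
  have a: "a = max (x / v1) (x / v2)" and b: "b = t"
    unfolding a_def b_def window_start_def window_end_def Mx_def using v2 by simp_all
  have "v2 * t < 0" using v2 t by (simp add: mult_neg_pos)
  then have "v2 * t < x" "x < v1 * t" using x by (auto simp: min_def split: if_splits)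
  moreover have "0 \<le> x / v1 \<or> 0 \<le> x / v2"
    using v1 v2 by (cases "0 \<le> x") (auto simp: divide_nonneg_pos divide_nonpos_neg)
  ultimately show ?thesis using lower upper unfolding a b by auto
next
  case v2: False
  then have v1: "0 < v2" "0 < v1" using cs by auto
  have "0 < v2 * t" using v1 t by simp
  then have x_pos: "0 < x" and "x < v1 * t" using x by (auto simp: min_def split: if_splits)
  have lower: "v2 * s < x \<longleftrightarrow> s < x / v2" for s using v1 by (simp add: pos_less_divide_eq mult.commute)
  have upper: "x < v1 * s \<longleftrightarrow> x / v1 < s" for s using v1 by (simp add: pos_divide_less_eq mult.commute)
  have a: "a = x / v1" and b: "b = min (x / v2) t"
    unfolding a_def b_def window_start_def window_end_def mxt_def using v2 by simp_all
  have "x / v1 < x / v2" using x_pos v1 cs v2 by (intro divide_strict_left_mono) auto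
  moreover have "x / v1 < t" using upper[of t] \<open>x < v1 * t\<close> by simp
  moreover have "0 < x / v1" using x_pos v1 by simp
  ultimately show ?thesis using lower upper unfolding a b by (auto simp: min_def)
qed

lemma window_empty:
  fixes v1 v2 x t s :: real
  assumes cs: "(v2 < 0 \<and> 0 < v1) \<or> (0 < v2 \<and> v2 < v1)"
    and x: "x \<notin> {min (v2 * t) 0 <..< v1 * t}" and s: "s \<in> {0..t}"
  shows "\<not> (v2 * s < x \<and> x < v1 * s)"
proof
  assume between: "v2 * s < x \<and> x < v1 * s"
  have "0 < v1" using cs by auto
  then have "v1 * s \<le> v1 * t" using s by (simp add: mult_left_mono)
  moreover have "min (v2 * t) 0 \<le> v2 * s"
  proof (cases "v2 < 0")
    case True
    then have "v2 * t \<le> v2 * s" using s by (simp add: mult_left_mono_neg)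
    then show ?thesis by (simp add: min.coboundedI1)
  next
    case False
    then have "0 \<le> v2 * s" using s by simp
    then show ?thesis by (simp add: min.coboundedI2)
  qed
  ultimately show False using between x by auto
qed

lemma has_integral_window:
  fixes v1 v2 x t :: real and f :: "real \<Rightarrow> real"
  assumes cs: "(v2 < 0 \<and> 0 < v1) \<or> (0 < v2 \<and> v2 < v1)" and t: "t > 0"
    and F: "\<And>a b. 0 \<le> a \<Longrightarrow> a \<le> b \<Longrightarrow> (f has_integral F a b) {a..b}"
  shows "((\<lambda>s. indicator {v2 * s <..< v1 * s} x * f s) has_integral
           Ibold v1 v2 x t * F (window_start v1 v2 x) (window_end v1 v2 x t)) {0..t}"
proof (cases "x \<in> {min (v2 * t) 0 <..< v1 * t}")
  case False
  then have "((\<lambda>s. indicator {v2 * s <..< v1 * s} x * f s) has_integral 0) {0..t}"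
    using window_empty[OF cs False] by (intro has_integral_eq[OF _ has_integral_0]) auto
  then show ?thesis using False by (simp add: Ibold_def)
next
  case True
  define a b where "a = window_start v1 v2 x" and "b = window_end v1 v2 x t"
  have window: "0 \<le> a \<and> a \<le> b \<and> b \<le> t
      \<and> (\<forall>s \<in> {0..t} - {a, b}. (v2 * s < x \<and> x < v1 * s) \<longleftrightarrow> s \<in> {a..b})"
    using window_interval[OF cs t True] unfolding a_def b_def .
  then have "(f has_integral F a b) (cbox a b)" using F by simp
  then have "((\<lambda>s. if s \<in> {a..b} then f s else 0) has_integral F a b) {0..t}"
    using has_integral_restrict_closed_subinterval[of f "F a b" a b 0 t] window by auto
  then have "((\<lambda>s. indicator {v2 * s <..< v1 * s} x * f s) has_integral F a b) {0..t}"
  proof (rule has_integral_spike_finite[of "{a, b}", rotated 2])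
    fix s assume "s \<in> {0..t} - {a, b}"
    with window have "(v2 * s < x \<and> x < v1 * s) \<longleftrightarrow> s \<in> {a..b}" by blast
    then show "indicator {v2 * s <..< v1 * s} x * f s = (if s \<in> {a..b} then f s else 0)"
      by (simp add: indicator_def)
  qed simp
  then show ?thesis using True by (simp add: Ibold_def a_def b_def)
qed

lemma GammaL_window_eq:
  assumes "(v2 < 0 \<and> 0 < v1) \<or> (0 < v2 \<and> v2 < v1)"
  shows "GammaL lam xi v1 v2 x t =
    incgamma 0 ((window_start v1 v2 x + 1 / lam) * xi) ((window_end v1 v2 x t + 1 / lam) * xi)"
  using assms unfolding GammaL_def window_start_def window_end_def by auto

lemma ThetaL_window_eq:
  assumes "(v2 < 0 \<and> 0 < v1) \<or> (0 < v2 \<and> v2 < v1)"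
  shows "ThetaL lam xi v1 v2 x t =
    decay lam xi (window_start v1 v2 x) - decay lam xi (window_end v1 v2 x t)"
  using assms unfolding ThetaL_def decay_def window_start_def window_end_def by auto

section \<open>Time integrals of the sub-densities\<close>

definition coef_slope :: "real \<Rightarrow> real \<Rightarrow> real \<Rightarrow> nat \<Rightarrow> real" where
  "coef_slope lam v1 v2 i = (if i = 1 then - lam * v2 else lam * v1) / (v1 - v2)"

lemma coef_affine:
  assumes "v1 \<noteq> v2"
  shows "coef lam v1 v2 i j x s = coef lam v1 v2 i j x 0 + coef_slope lam v1 v2 i * s"
proof -
  define D where "D = v1 - v2"
  have v1: "v1 = v2 + D" and "D \<noteq> 0" using assms unfolding D_def by auto
  then show ?thesis unfolding coef_def coef_slope_def tau_def v1 by (auto simp: field_simps)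
qed

lemma coef_add: "coef lam v1 v2 1 j x s + coef lam v1 v2 2 j x s = 1 + lam * s"
  unfolding coef_def by (auto simp: algebra_simps)

lemma coef_diff:
  assumes "j \<in> {1, 2}"
  shows "coef lam v1 v2 1 j x s - coef lam v1 v2 2 j x s = lam * (2 * tau v1 v2 x s - s) + (-1) ^ j"
  using assms unfolding coef_def by (auto simp: algebra_simps)

lemma coef_slope_add:
  assumes "v1 \<noteq> v2"
  shows "coef_slope lam v1 v2 1 + coef_slope lam v1 v2 2 = lam"
proof -
  define D where "D = v1 - v2"
  have v1: "v1 = v2 + D" and "D \<noteq> 0" using assms unfolding D_def by auto
  then show ?thesis unfolding coef_slope_def v1 by (simp add: field_simps)
qed

lemma coef_slope_diff:
  "coef_slope lam v1 v2 1 - coef_slope lam v1 v2 2 = - lam * (v1 + v2) / (v1 - v2)"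
proof -
  have "coef_slope lam v1 v2 1 = - lam * v2 / (v1 - v2)" "coef_slope lam v1 v2 2 = lam * v1 / (v1 - v2)"
    unfolding coef_slope_def by simp_all
  then show ?thesis by (simp only: diff_divide_distrib[symmetric]) (simp add: algebra_simps)
qed

lemma pcont_decay_kernel:
  assumes "v1 \<noteq> v2"
  shows "exp (- xi * s) * pcont lam v1 v2 i j x s = lam / (v1 - v2) *
    (indicator {v2 * s <..< v1 * s} x
      * decay_kernel lam xi (coef lam v1 v2 i j x 0) (coef_slope lam v1 v2 i) s)"
proof -
  have "coef lam v1 v2 i j x s = coef lam v1 v2 i j x 0 + coef_slope lam v1 v2 i * s"
    using assms by (rule coef_affine)
  then show ?thesis unfolding pcont_def decay_kernel_def by simp
qed

definition pcont_laplace ::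
    "real \<Rightarrow> real \<Rightarrow> real \<Rightarrow> real \<Rightarrow> nat \<Rightarrow> nat \<Rightarrow> real \<Rightarrow> real \<Rightarrow> real" where
  "pcont_laplace lam xi v1 v2 i j x t = integral {0..t} (\<lambda>s. exp (- xi * s) * pcont lam v1 v2 i j x s)"

lemma pcont_laplace_eq:
  assumes lam: "lam > 0" and xi: "xi > 0" and cs: "(v2 < 0 \<and> 0 < v1) \<or> (0 < v2 \<and> v2 < v1)"
    and t: "t > 0"
  shows "pcont_laplace lam xi v1 v2 i j x t = lam / (v1 - v2) * (Ibold v1 v2 x t *
    decay_kernel_integral lam xi (coef lam v1 v2 i j x 0) (coef_slope lam v1 v2 i)
      (window_start v1 v2 x) (window_end v1 v2 x t))"
proof -
  have "v1 \<noteq> v2" using cs by auto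
  have "((\<lambda>s. indicator {v2 * s <..< v1 * s} x
          * decay_kernel lam xi (coef lam v1 v2 i j x 0) (coef_slope lam v1 v2 i) s) has_integral
        Ibold v1 v2 x t * decay_kernel_integral lam xi (coef lam v1 v2 i j x 0) (coef_slope lam v1 v2 i)
          (window_start v1 v2 x) (window_end v1 v2 x t)) {0..t}"
    by (intro has_integral_window cs t has_integral_decay_kernel lam xi)
  from has_integral_mult_right[OF this, of "lam / (v1 - v2)"] show ?thesis
    unfolding pcont_laplace_def pcont_decay_kernel[OF \<open>v1 \<noteq> v2\<close>] by (rule integral_unique)
qed

context
  fixes lam xi v1 v2 t x :: real and j :: nat
  assumes lam: "lam > 0" and xi: "xi > 0"
    and cs: "(v2 < 0 \<and> 0 < v1) \<or> (0 < v2 \<and> v2 < v1)" and t: "t > 0"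
begin

lemma pcont_laplace_add:
  "xi * (pcont_laplace lam xi v1 v2 1 j x t + pcont_laplace lam xi v1 v2 2 j x t)
    = Ibold v1 v2 x t * xi * exp (xi / lam) / (v1 - v2) * GammaL lam xi v1 v2 x t"
proof -
  define a b where "a = window_start v1 v2 x" and "b = window_end v1 v2 x t"
  define D where "D = v1 - v2"
  have "D \<noteq> 0" using cs unfolding D_def by auto
  have "pcont_laplace lam xi v1 v2 1 j x t + pcont_laplace lam xi v1 v2 2 j x t
      = lam / (v1 - v2) * (Ibold v1 v2 x t *
          (decay_kernel_integral lam xi (coef lam v1 v2 1 j x 0) (coef_slope lam v1 v2 1) a b
           + decay_kernel_integral lam xi (coef lam v1 v2 2 j x 0) (coef_slope lam v1 v2 2) a b))"
    unfolding pcont_laplace_eq[OF lam xi cs t] a_def b_def by (simp only: distrib_left)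
  also have "\<dots> = lam / (v1 - v2) * (Ibold v1 v2 x t * decay_kernel_integral lam xi 1 lam a b)"
  proof -
    have "coef lam v1 v2 1 j x 0 + coef lam v1 v2 2 j x 0 = 1" using coef_add[of lam v1 v2 j x 0] by simp
    moreover have "coef_slope lam v1 v2 1 + coef_slope lam v1 v2 2 = lam"
      using \<open>D \<noteq> 0\<close> unfolding D_def by (intro coef_slope_add) simp
    ultimately show ?thesis by (simp only: decay_kernel_integral_add)
  qed
  also have "decay_kernel_integral lam xi 1 lam a b
      = exp (xi / lam) / lam * incgamma 0 ((a + 1 / lam) * xi) ((b + 1 / lam) * xi)"
    using lam unfolding decay_kernel_integral_def by simp
  finally have sum: "pcont_laplace lam xi v1 v2 1 j x t + pcont_laplace lam xi v1 v2 2 j x t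
      = lam / (v1 - v2) * (Ibold v1 v2 x t *
          (exp (xi / lam) / lam * incgamma 0 ((a + 1 / lam) * xi) ((b + 1 / lam) * xi)))" .
  show ?thesis
    using lam \<open>D \<noteq> 0\<close> unfolding sum GammaL_window_eq[OF cs] a_def b_def D_def
    by (simp add: field_simps)
qed

lemma pcont_laplace_diff:
  assumes j: "j \<in> {1, 2}"
  shows "xi * (pcont_laplace lam xi v1 v2 1 j x t - pcont_laplace lam xi v1 v2 2 j x t)
    = Ibold v1 v2 x t *
       (2 * xi * (vel v1 v2 (3 - j) + lam * x) / (v1 - v2)^2 * ThetaL lam xi v1 v2 x t
        - xi * exp (xi / lam) / (v1 - v2)^2
          * (2 * vel v1 v2 (3 - j) * xi * (x / vel v1 v2 (3 - j) + 1 / lam) + (v1 + v2))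
          * GammaL lam xi v1 v2 x t)"
proof -
  define a b where "a = window_start v1 v2 x" and "b = window_end v1 v2 x t"
  define vo where "vo = vel v1 v2 (3 - j)"
  define D where "D = v1 - v2"
  define al where "al = 2 * lam * x / D + (-1) ^ j"
  define be where "be = - lam * (v1 + v2) / D"
  have v1: "v1 = v2 + D" and "D \<noteq> 0" using cs unfolding D_def by auto
  have vo: "vo \<noteq> 0" using j cs unfolding vo_def vel_def by auto
  have "pcont_laplace lam xi v1 v2 1 j x t - pcont_laplace lam xi v1 v2 2 j x t
      = lam / D * (Ibold v1 v2 x t *
          (decay_kernel_integral lam xi (coef lam v1 v2 1 j x 0) (coef_slope lam v1 v2 1) a b
           - decay_kernel_integral lam xi (coef lam v1 v2 2 j x 0) (coef_slope lam v1 v2 2) a b))"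
    unfolding pcont_laplace_eq[OF lam xi cs t] a_def b_def D_def by (simp only: right_diff_distrib)
  also have "\<dots> = lam / D * (Ibold v1 v2 x t * decay_kernel_integral lam xi al be a b)"
  proof -
    have "coef lam v1 v2 1 j x 0 - coef lam v1 v2 2 j x 0 = al"
      using coef_diff[OF j, of lam v1 v2 x 0] unfolding al_def tau_def D_def by simp
    moreover have "coef_slope lam v1 v2 1 - coef_slope lam v1 v2 2 = be"
      unfolding be_def D_def by (rule coef_slope_diff)
    ultimately show ?thesis by (simp only: decay_kernel_integral_diff)
  qed
  finally have diff: "pcont_laplace lam xi v1 v2 1 j x t - pcont_laplace lam xi v1 v2 2 j x t
      = lam / D * (Ibold v1 v2 x t * decay_kernel_integral lam xi al be a b)" .
  have gap: "al - be / lam = 2 * (vo + lam * x) / D"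
    using j lam \<open>D \<noteq> 0\<close> unfolding al_def be_def vo_def vel_def v1 by (auto simp: field_simps)
  show ?thesis
    unfolding diff decay_kernel_integral_def gap GammaL_window_eq[OF cs] ThetaL_window_eq[OF cs]
      vo_def[symmetric] D_def[symmetric] a_def[symmetric] b_def[symmetric]
    unfolding be_def using lam vo \<open>D \<noteq> 0\<close> by (simp add: field_simps power2_eq_square)
qed

end

lemma exp_pcont_abs_le:
  assumes lam: "lam > 0" and xi: "xi \<ge> 0" and v12: "v2 < v1" and s: "s \<in> {0..t}"
  shows "\<bar>exp (- xi * s) * pcont lam v1 v2 i j x s\<bar> \<le> lam * (1 + lam * t) / (v1 - v2)"
proof (cases "v2 * s < x \<and> x < v1 * s")
  case False
  then show ?thesis using lam s v12 by (simp add: pcont_def)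
next
  case True
  define c where "c = coef lam v1 v2 i j x s"
  have "0 < tau v1 v2 x s" "tau v1 v2 x s < s"
    using True v12 by (auto simp: tau_def field_simps)
  then have "0 \<le> lam * tau v1 v2 x s" "lam * tau v1 v2 x s \<le> lam * s" "0 \<le> lam * s" "lam * s \<le> lam * t"
    using lam s by auto
  then have c: "0 \<le> c" "c \<le> 1 + lam * t"
    unfolding c_def coef_def by (auto simp: algebra_simps)
  have "exp (- xi * s) \<le> 1" "1 \<le> (1 + lam * s)^2" using s lam xi by simp_all
  then have "exp (- xi * s) * (lam * c / ((v1 - v2) * (1 + lam * s)^2)) \<le> 1 * (lam * c / (v1 - v2))"
    using lam c v12 by (intro mult_mono divide_left_mono) (auto intro!: mult_pos_pos)
  also have "\<dots> \<le> 1 * (lam * (1 + lam * t) / (v1 - v2))"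
    using lam c v12 by (intro mult_left_mono divide_right_mono) auto
  finally show ?thesis
    using True lam c v12 by (simp add: pcont_def c_def)
qed

lemma pcont_eq_0:
  assumes s: "s \<in> {0..t}" and x: "\<bar>x\<bar> > (\<bar>v1\<bar> + \<bar>v2\<bar>) * t"
  shows "pcont lam v1 v2 i j x s = 0"
proof -
  have "\<bar>v1 * s\<bar> \<le> \<bar>v1\<bar> * t" "\<bar>v2 * s\<bar> \<le> \<bar>v2\<bar> * t"
    using s by (auto simp: abs_mult intro: mult_left_mono)
  then have "\<not> (v2 * s < x \<and> x < v1 * s)" using x by (auto simp: abs_less_iff abs_le_iff algebra_simps)
  then show ?thesis by (simp add: pcont_def)
qed

lemma pcont_fubini:
  fixes phi :: "real \<Rightarrow> real"
  assumes lam: "lam > 0" and xi: "xi \<ge> 0" and v12: "v2 < v1" and phi: "continuous_on UNIV phi"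
  shows "s \<in> {0..t} \<Longrightarrow> (\<lambda>x. phi x * (exp (- xi * s) * pcont lam v1 v2 i j x s)) integrable_on UNIV"
    and "((\<lambda>s. integral UNIV (\<lambda>x. phi x * (exp (- xi * s) * pcont lam v1 v2 i j x s))) has_integral
           integral UNIV (\<lambda>x. phi x * pcont_laplace lam xi v1 v2 i j x t)) {0..t}"
    and "(\<lambda>x. phi x * pcont_laplace lam xi v1 v2 i j x t) integrable_on UNIV"
proof -
  define R where "R = (\<bar>v1\<bar> + \<bar>v2\<bar>) * t"
  define C where "C = lam * (1 + lam * t) / (v1 - v2)"
  define K where "K x s = phi x * (exp (- xi * s) * pcont lam v1 v2 i j x s)" for x s
  obtain B where B: "B \<ge> 0" "\<And>x. x \<in> {- R..R} \<Longrightarrow> \<bar>phi x\<bar> \<le> B"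
    using continuous_on_compact_bound[of "{- R..R}" phi] phi continuous_on_subset
    by (metis compact_Icc real_norm_def subset_UNIV)
  have [measurable]: "phi \<in> borel_measurable borel"
    using phi by (rule borel_measurable_continuous_onI)
  have "(\<lambda>z. K (fst z) (snd z)) \<in> borel_measurable (lborel \<Otimes>\<^sub>M lborel)"
    unfolding K_def pcont_def coef_def tau_def indicator_def of_bool_def greaterThanLessThan_iff
    by measurable
  then have meas: "case_prod K \<in> borel_measurable borel" by (simp add: lborel_prod case_prod_beta')
  have support: "K x s = 0" if "s \<in> {0..t}" "x \<notin> {- R..R}" for x s
  proof -
    have "\<bar>x\<bar> > (\<bar>v1\<bar> + \<bar>v2\<bar>) * t" using that(2) unfolding R_def by auto
    then show ?thesis unfolding K_def using pcont_eq_0[OF that(1)] by simp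
  qed
  have bound: "\<bar>K x s\<bar> \<le> B * C" if "s \<in> {0..t}" for x s
  proof (cases "x \<in> {- R..R}")
    case True
    then show ?thesis
      unfolding K_def abs_mult[of "phi x"] C_def using B exp_pcont_abs_le[OF lam xi v12 that]
      by (intro mult_mono) auto
  next
    case False
    have "0 \<le> C" using exp_pcont_abs_le[OF lam xi v12 that] unfolding C_def by (meson abs_ge_zero order_trans)
    then show ?thesis using support[OF that False] B(1) by simp
  qed
  have laplace: "integral {0..t} (K x) = phi x * pcont_laplace lam xi v1 v2 i j x t" for x
    unfolding K_def pcont_laplace_def by simp
  note fubini = bounded_kernel_fubini[where a = 0 and b = t and c = "- R" and d = R, OF meas bound support]
  show "s \<in> {0..t} \<Longrightarrow> (\<lambda>x. phi x * (exp (- xi * s) * pcont lam v1 v2 i j x s)) integrable_on UNIV"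
    and "((\<lambda>s. integral UNIV (\<lambda>x. phi x * (exp (- xi * s) * pcont lam v1 v2 i j x s))) has_integral
           integral UNIV (\<lambda>x. phi x * pcont_laplace lam xi v1 v2 i j x t)) {0..t}"
    and "(\<lambda>x. phi x * pcont_laplace lam xi v1 v2 i j x t) integrable_on UNIV"
    using fubini unfolding laplace unfolding K_def by simp_all
qed

section \<open>Density and flow function of the reset process\<close>

lemma pcont_add:
  assumes "1 + lam * t \<noteq> 0"
  shows "pcont lam v1 v2 1 j x t + pcont lam v1 v2 2 j x t
    = indicator {v2 * t <..< v1 * t} x * lam / ((v1 - v2) * (1 + lam * t))"
proof -
  have "pcont lam v1 v2 1 j x t + pcont lam v1 v2 2 j x t
      = indicator {v2 * t <..< v1 * t} x * lam * (coef lam v1 v2 1 j x t + coef lam v1 v2 2 j x t)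
        / ((v1 - v2) * (1 + lam * t)^2)"
    unfolding pcont_def by (simp add: add_divide_distrib algebra_simps)
  then show ?thesis
    using assms unfolding coef_add by (simp add: power2_eq_square)
qed

lemma pcont_diff:
  assumes "j \<in> {1, 2}"
  shows "pcont lam v1 v2 1 j x t - pcont lam v1 v2 2 j x t
    = indicator {v2 * t <..< v1 * t} x * lam * (lam * (2 * tau v1 v2 x t - t) + (-1) ^ j)
        / ((v1 - v2) * (1 + lam * t)^2)"
  unfolding pcont_def coef_diff[OF assms, symmetric] by (simp add: diff_divide_distrib algebra_simps)

lemma ptact_eq:
  fixes phi :: "real \<Rightarrow> real"
  assumes lam: "lam > 0" and xi: "xi > 0" and v12: "v2 < v1" and v: "vel v1 v2 j \<noteq> 0"
    and t: "t \<ge> 0" and phi: "continuous_on UNIV phi"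
  shows "ptact lam xi v1 v2 i j phi t =
      (if i = j then exp (- xi * t) / (1 + lam * t) * phi (vel v1 v2 j * t)
         + integral UNIV (\<lambda>x. phi x * ballistic_density lam xi (vel v1 v2 j) x t) else 0)
      + integral UNIV (\<lambda>x. phi x * (exp (- xi * t) * pcont lam v1 v2 i j x t))
      + xi * integral UNIV (\<lambda>x. phi x * pcont_laplace lam xi v1 v2 i j x t)"
proof -
  define A where "A s = (if i = j then exp (- xi * s) * (phi (vel v1 v2 j * s) / (1 + lam * s)) else 0)" for s
  define P where "P s = integral UNIV (\<lambda>x. phi x * (exp (- xi * s) * pcont lam v1 v2 i j x s))" for s
  have pact: "exp (- xi * s) * pact lam v1 v2 i j phi s = A s + P s" for s
  proof -
    have "(\<lambda>x. phi x * (exp (- xi * s) * pcont lam v1 v2 i j x s))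
        = (\<lambda>x. exp (- xi * s) * (phi x * pcont lam v1 v2 i j x s))"
      by (simp add: fun_eq_iff ac_simps)
    then show ?thesis unfolding pact_def A_def P_def by (simp add: distrib_left)
  qed
  have atom_int: "A integrable_on {0..t}"
  proof (cases "i = j")
    case True
    then have "A = (\<lambda>s. exp (- xi * s) * (phi (vel v1 v2 j * s) / (1 + lam * s)))"
      by (simp add: A_def fun_eq_iff)
    then show ?thesis using ballistic_density_integral(1)[OF v less_imp_le[OF lam] phi] by simp
  next
    case False
    then have "A = (\<lambda>s. 0)" by (simp add: A_def fun_eq_iff)
    then show ?thesis by (simp add: integrable_0)
  qed
  have P_has: "(P has_integral integral UNIV (\<lambda>x. phi x * pcont_laplace lam xi v1 v2 i j x t)) {0..t}"
    unfolding P_def using pcont_fubini(2)[OF lam _ v12 phi] xi by simp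
  have "integral {0..t} (\<lambda>s. exp (- xi * s) * pact lam v1 v2 i j phi s)
      = integral {0..t} A + integral UNIV (\<lambda>x. phi x * pcont_laplace lam xi v1 v2 i j x t)"
    unfolding pact integral_add[OF atom_int has_integral_integrable[OF P_has]] integral_unique[OF P_has] ..
  moreover have "xi * integral {0..t} A
      = (if i = j then integral UNIV (\<lambda>x. phi x * ballistic_density lam xi (vel v1 v2 j) x t) else 0)"
    unfolding A_def using ballistic_density_integral(3)[OF v _ phi] lam by simp
  ultimately show ?thesis
    unfolding ptact_def pact A_def P_def by (simp add: algebra_simps)
qed

context
  fixes lam xi v1 v2 t :: real and j :: nat and phi :: "real \<Rightarrow> real"
  assumes lam: "lam > 0" and xi: "xi > 0"
    and cs: "(v2 < 0 \<and> 0 < v1) \<or> (0 < v2 \<and> v2 < v1)" and j: "j \<in> {1, 2}" and t: "t > 0"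
    and phi: "continuous_on UNIV phi"
begin

lemma dens_cont_eq:
  "dens_cont lam xi v1 v2 j x t = ballistic_density lam xi (vel v1 v2 j) x t
    + exp (- xi * t) * (pcont lam v1 v2 1 j x t + pcont lam v1 v2 2 j x t)
    + xi * (pcont_laplace lam xi v1 v2 1 j x t + pcont_laplace lam xi v1 v2 2 j x t)"
proof -
  have "1 + lam * t \<noteq> 0" using lam t by (simp add: add_pos_pos less_imp_neq[symmetric])
  then show ?thesis
    unfolding dens_cont_def ballistic_density_def pcont_add[OF \<open>1 + lam * t \<noteq> 0\<close>]
      pcont_laplace_add[OF lam xi cs t]
    by (simp add: algebra_simps)
qed

lemma flow_cont_eq:
  "flow_cont lam xi v1 v2 j x t = (-1) ^ (j - 1) * ballistic_density lam xi (vel v1 v2 j) x t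
    + exp (- xi * t) * (pcont lam v1 v2 1 j x t - pcont lam v1 v2 2 j x t)
    + xi * (pcont_laplace lam xi v1 v2 1 j x t - pcont_laplace lam xi v1 v2 2 j x t)"
  unfolding flow_cont_def ballistic_density_def pcont_diff[OF j] pcont_laplace_diff[OF lam xi cs t j]
  by (simp add: algebra_simps)

lemma integrable_on_density_parts:
  shows "(\<lambda>x. phi x * ballistic_density lam xi (vel v1 v2 j) x t) integrable_on UNIV"
    and "(\<lambda>x. phi x * (exp (- xi * t) * pcont lam v1 v2 i j x t)) integrable_on UNIV"
    and "(\<lambda>x. phi x * pcont_laplace lam xi v1 v2 i j x t) integrable_on UNIV"
proof -
  have v: "vel v1 v2 j \<noteq> 0" and v12: "v2 < v1" using cs j by (auto simp: vel_def)
  show "(\<lambda>x. phi x * ballistic_density lam xi (vel v1 v2 j) x t) integrable_on UNIV"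
    by (rule ballistic_density_integral(2)[OF v less_imp_le[OF lam] phi])
  show "(\<lambda>x. phi x * (exp (- xi * t) * pcont lam v1 v2 i j x t)) integrable_on UNIV"
    using t by (intro pcont_fubini(1)[OF lam less_imp_le[OF xi] v12 phi]) auto
  show "(\<lambda>x. phi x * pcont_laplace lam xi v1 v2 i j x t) integrable_on UNIV"
    by (rule pcont_fubini(3)[OF lam less_imp_le[OF xi] v12 phi])
qed

lemma ptact_sum:
  "ptact lam xi v1 v2 1 j phi t + ptact lam xi v1 v2 2 j phi t
    = exp (- xi * t) / (1 + lam * t) * phi (vel v1 v2 j * t)
      + integral UNIV (\<lambda>x. phi x * dens_cont lam xi v1 v2 j x t)"
proof -
  have v: "vel v1 v2 j \<noteq> 0" and v12: "v2 < v1" using cs j by (auto simp: vel_def)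
  define B where "B = (\<lambda>x. phi x * ballistic_density lam xi (vel v1 v2 j) x t)"
  define T where "T i = (\<lambda>x. phi x * (exp (- xi * t) * pcont lam v1 v2 i j x t))" for i
  define Q where "Q i = (\<lambda>x. phi x * pcont_laplace lam xi v1 v2 i j x t)" for i
  have "(\<lambda>x. phi x * dens_cont lam xi v1 v2 j x t) = (\<lambda>x. B x + (T 1 x + T 2 x) + xi * (Q 1 x + Q 2 x))"
    unfolding B_def T_def Q_def dens_cont_eq by (simp add: fun_eq_iff algebra_simps)
  moreover have "((\<lambda>x. B x + (T 1 x + T 2 x) + xi * (Q 1 x + Q 2 x)) has_integral
      integral UNIV B + (integral UNIV (T 1) + integral UNIV (T 2))
      + xi * (integral UNIV (Q 1) + integral UNIV (Q 2))) UNIV"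
    unfolding B_def T_def Q_def
    by (intro has_integral_add has_integral_mult_right integrable_integral integrable_on_density_parts)
  ultimately show ?thesis
    using j unfolding ptact_eq[OF lam xi v12 v less_imp_le[OF t] phi] B_def T_def Q_def
    by (auto simp: integral_unique algebra_simps)
qed

lemma ptact_diff:
  "ptact lam xi v1 v2 1 j phi t - ptact lam xi v1 v2 2 j phi t
    = (-1) ^ (j - 1) * exp (- xi * t) / (1 + lam * t) * phi (vel v1 v2 j * t)
      + integral UNIV (\<lambda>x. phi x * flow_cont lam xi v1 v2 j x t)"
proof -
  have v: "vel v1 v2 j \<noteq> 0" and v12: "v2 < v1" using cs j by (auto simp: vel_def)
  define B where "B = (\<lambda>x. phi x * ballistic_density lam xi (vel v1 v2 j) x t)"
  define T where "T i = (\<lambda>x. phi x * (exp (- xi * t) * pcont lam v1 v2 i j x t))" for i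
  define Q where "Q i = (\<lambda>x. phi x * pcont_laplace lam xi v1 v2 i j x t)" for i
  have "(\<lambda>x. phi x * flow_cont lam xi v1 v2 j x t)
      = (\<lambda>x. (-1) ^ (j - 1) * B x + (T 1 x - T 2 x) + xi * (Q 1 x - Q 2 x))"
    unfolding B_def T_def Q_def flow_cont_eq by (simp add: fun_eq_iff algebra_simps)
  moreover have "((\<lambda>x. (-1) ^ (j - 1) * B x + (T 1 x - T 2 x) + xi * (Q 1 x - Q 2 x)) has_integral
      (-1) ^ (j - 1) * integral UNIV B + (integral UNIV (T 1) - integral UNIV (T 2))
      + xi * (integral UNIV (Q 1) - integral UNIV (Q 2))) UNIV"
    unfolding B_def T_def Q_def
    by (intro has_integral_add has_integral_diff has_integral_mult_right integrable_integral
        integrable_on_density_parts)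
  ultimately show ?thesis
    using j unfolding ptact_eq[OF lam xi v12 v less_imp_le[OF t] phi] B_def T_def Q_def
    by (auto simp: integral_unique algebra_simps)
qed

end

theorem theorem2:
  fixes lam xi v1 v2 t :: real and j :: nat
  assumes "lam > 0" and "xi > 0" and "v2 < v1"
    and "(v2 < 0 \<and> 0 < v1) \<or> (0 < v2 \<and> v2 < v1)"
    and "j \<in> {1, 2}" and "t > 0"
  shows "\<forall>phi. continuous_on UNIV phi \<longrightarrow>
      ptact lam xi v1 v2 1 j phi t + ptact lam xi v1 v2 2 j phi t
        = exp (- xi * t) / (1 + lam * t) * phi (vel v1 v2 j * t)
          + integral UNIV (\<lambda>x. phi x * dens_cont lam xi v1 v2 j x t)
    \<and> ptact lam xi v1 v2 1 j phi t - ptact lam xi v1 v2 2 j phi t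
        = (-1) ^ (j - 1) * exp (- xi * t) / (1 + lam * t) * phi (vel v1 v2 j * t)
          + integral UNIV (\<lambda>x. phi x * flow_cont lam xi v1 v2 j x t)"
  using ptact_sum[OF assms(1,2,4,5,6)] ptact_diff[OF assms(1,2,4,5,6)] by blast

end
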